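(* Consider the Feel-Good Thompson Sampling algorithm described in the context, run with learning rate $\eta\in(0,1]$, in the adversarial setting described there. Then $$\mathrm{Reg}_{\mathsf{MNL}}\le 12\eta NK(K+1)^4T+4\eta T+\frac{Z_T}{\eta},\qquad Z_T=-\mathbb{E}\Big[\log\mathbb{E}_{f\sim p_1}\Big[\exp\Big(-\eta\sum_{t=1}^T(\hat\ell_{t,f}-\hat\ell_{t,f^\star})\Big)\Big]\Big].$$
   Context: $N\ge K\ge1$, $\mathcal{S}$ = subsets $S\subseteq[N]$ with $1\le|S|\le K$. For $S\in\mathcal{S}$, $v\in[0,1]^N$: $\mu(S,v)$ is the distribution on $\{0,\dots,N\}$ with $\mu_i(S,v)=\frac{v_i}{1+\sum_{j\in S}v_j}$ ($i\in S$), $\mu_0(S,v)=\frac{1}{1+\sum_{j\in S}v_j}$, $0$ otherwise; $R(S,v,r)=\frac{\sum_{i\in S}r_iv_i}{1+\sum_{i\in S}v_i}$. Adversarial setting: $\mathcal{F}$ is a class of functions $\mathcal{X}\to[0,1]^N$ containing an unknown $f^\star$; at each round $t=1,\dots,T$ a context $x_t\in\mathcal{X}$ and reward vector $r_t\in[0,1]^N$ are chosen arbitrarily by an adversary (possibly depending on the past history but not on the learner's current internal randomness); the learner picks $S_t\in\mathcal{S}$ and observes $i_t\sim\mu(S_t,f^\star(x_t))$. Regret: $\mathrm{Reg}_{\mathsf{MNL}}=\mathbb{E}[\sum_{t=1}^T\max_{S}R(S,f^\star(x_t),r_t)-R(S_t,f^\star(x_t),r_t)]$. Feel-Good Thompson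 Sampling: $p_1$ is the uniform distribution over $\mathcal{F}$. At round $t$: sample $f_t\sim p_t$; receive $(x_t,r_t)$; choose $S_t\in\arg\max_{S\in\mathcal{S}}R(S,f_t(x_t),r_t)$; observe $i_t$; for each $f\in\mathcal{F}$ define $$\hat\ell_{t,f}=\frac{1}{8\eta K}\sum_{i\in S_t}\big(\mu_i(S_t,f(x_t))-\mathbb{1}[i=i_t]\big)^2-\max_{S\in\mathcal{S}}R(S,f(x_t),r_t);$$ and update $p_{t+1}(f)\propto p_t(f)\exp(-\eta\hat\ell_{t,f})$. *)

theory Defs
  imports "HOL-Probability.Probability"
begin

text \<open>Items are [N] = {1..N}; the outcome 0 is the no-purchase option.
  Preference vectors v in [0,1]^N are modelled as functions nat => real.\<close>

definition assortments :: "nat \<Rightarrow> nat \<Rightarrow> nat set set" where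
  "assortments N K = {S. S \<subseteq> {1..N} \<and> 1 \<le> card S \<and> card S \<le> K}"

definition mnl_prob :: "nat set \<Rightarrow> (nat \<Rightarrow> real) \<Rightarrow> nat \<Rightarrow> real" where
  "mnl_prob S v i =
     (if i \<in> S then v i / (1 + (\<Sum>j\<in>S. v j))
      else if i = 0 then 1 / (1 + (\<Sum>j\<in>S. v j)) else 0)"

definition mnl_pmf :: "nat set \<Rightarrow> (nat \<Rightarrow> real) \<Rightarrow> nat pmf" where
  "mnl_pmf S v = embed_pmf (mnl_prob S v)"

definition mnl_rev :: "nat set \<Rightarrow> (nat \<Rightarrow> real) \<Rightarrow> (nat \<Rightarrow> real) \<Rightarrow> real" where
  "mnl_rev S v r = (\<Sum>i\<in>S. r i * v i) / (1 + (\<Sum>i\<in>S. v i))"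

definition max_rev :: "nat \<Rightarrow> nat \<Rightarrow> (nat \<Rightarrow> real) \<Rightarrow> (nat \<Rightarrow> real) \<Rightarrow> real" where
  "max_rev N K v r = Max ((\<lambda>S. mnl_rev S v r) ` assortments N K)"

text \<open>One round of history: (sampled f_t, x_t, r_t, S_t, i_t).\<close>
type_synonym 'x round = "('x \<Rightarrow> nat \<Rightarrow> real) \<times> 'x \<times> (nat \<Rightarrow> real) \<times> nat set \<times> nat"

definition loss_est :: "nat \<Rightarrow> nat \<Rightarrow> real \<Rightarrow> ('x \<Rightarrow> nat \<Rightarrow> real) \<Rightarrow> 'x round \<Rightarrow> real" where
  "loss_est N K \<eta> f rd =
     (case rd of (g, x, r, S, i) \<Rightarrow>
        1 / (8 * \<eta> * real K) * (\<Sum>j\<in>S. (mnl_prob S (f x) j - (if j = i then 1 else 0))\<^sup>2)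
        - max_rev N K (f x) r)"

definition cum_loss :: "nat \<Rightarrow> nat \<Rightarrow> real \<Rightarrow> ('x \<Rightarrow> nat \<Rightarrow> real) \<Rightarrow> 'x round list \<Rightarrow> real" where
  "cum_loss N K \<eta> f h = (\<Sum>rd\<leftarrow>h. loss_est N K \<eta> f rd)"

definition posterior :: "('x \<Rightarrow> nat \<Rightarrow> real) set \<Rightarrow> nat \<Rightarrow> nat \<Rightarrow> real
    \<Rightarrow> 'x round list \<Rightarrow> ('x \<Rightarrow> nat \<Rightarrow> real) pmf" where
  "posterior F N K \<eta> h =
     embed_pmf (\<lambda>f. if f \<in> F then
        exp (- \<eta> * cum_loss N K \<eta> f h) / (\<Sum>g\<in>F. exp (- \<eta> * cum_loss N K \<eta> g h))
      else 0)"

text \<open>One round of FGTS against the adaptive adversary \<open>adv\<close> (which maps the past history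
  to the current context and reward vector), with argmax selection rule \<open>sel\<close>.\<close>
definition fgts_step :: "('x \<Rightarrow> nat \<Rightarrow> real) set \<Rightarrow> nat \<Rightarrow> nat \<Rightarrow> real
    \<Rightarrow> ('x \<Rightarrow> nat \<Rightarrow> real) \<Rightarrow> ('x round list \<Rightarrow> 'x \<times> (nat \<Rightarrow> real))
    \<Rightarrow> ((nat \<Rightarrow> real) \<Rightarrow> (nat \<Rightarrow> real) \<Rightarrow> nat set)
    \<Rightarrow> 'x round list \<Rightarrow> 'x round list pmf" where
  "fgts_step F N K \<eta> fstar adv sel h =
     bind_pmf (posterior F N K \<eta> h) (\<lambda>f.
       (let x = fst (adv h); r = snd (adv h); S = sel (f x) r in
        map_pmf (\<lambda>i. h @ [(f, x, r, S, i)]) (mnl_pmf S (fstar x))))"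

fun fgts_traj :: "('x \<Rightarrow> nat \<Rightarrow> real) set \<Rightarrow> nat \<Rightarrow> nat \<Rightarrow> real
    \<Rightarrow> ('x \<Rightarrow> nat \<Rightarrow> real) \<Rightarrow> ('x round list \<Rightarrow> 'x \<times> (nat \<Rightarrow> real))
    \<Rightarrow> ((nat \<Rightarrow> real) \<Rightarrow> (nat \<Rightarrow> real) \<Rightarrow> nat set)
    \<Rightarrow> nat \<Rightarrow> 'x round list pmf" where
  "fgts_traj F N K \<eta> fstar adv sel 0 = return_pmf []"
| "fgts_traj F N K \<eta> fstar adv sel (Suc t) =
     bind_pmf (fgts_traj F N K \<eta> fstar adv sel t) (fgts_step F N K \<eta> fstar adv sel)"

definition round_regret :: "nat \<Rightarrow> nat \<Rightarrow> ('x \<Rightarrow> nat \<Rightarrow> real) \<Rightarrow> 'x round \<Rightarrow> real" where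
  "round_regret N K fstar rd =
     (case rd of (g, x, r, S, i) \<Rightarrow> max_rev N K (fstar x) r - mnl_rev S (fstar x) r)"

definition regret_MNL :: "('x \<Rightarrow> nat \<Rightarrow> real) set \<Rightarrow> nat \<Rightarrow> nat \<Rightarrow> real
    \<Rightarrow> ('x \<Rightarrow> nat \<Rightarrow> real) \<Rightarrow> ('x round list \<Rightarrow> 'x \<times> (nat \<Rightarrow> real))
    \<Rightarrow> ((nat \<Rightarrow> real) \<Rightarrow> (nat \<Rightarrow> real) \<Rightarrow> nat set) \<Rightarrow> nat \<Rightarrow> real" where
  "regret_MNL F N K \<eta> fstar adv sel T =
     measure_pmf.expectation (fgts_traj F N K \<eta> fstar adv sel T)
       (\<lambda>h. \<Sum>rd\<leftarrow>h. round_regret N K fstar rd)"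

definition Z_term :: "('x \<Rightarrow> nat \<Rightarrow> real) set \<Rightarrow> nat \<Rightarrow> nat \<Rightarrow> real
    \<Rightarrow> ('x \<Rightarrow> nat \<Rightarrow> real) \<Rightarrow> ('x round list \<Rightarrow> 'x \<times> (nat \<Rightarrow> real))
    \<Rightarrow> ((nat \<Rightarrow> real) \<Rightarrow> (nat \<Rightarrow> real) \<Rightarrow> nat set) \<Rightarrow> nat \<Rightarrow> real" where
  "Z_term F N K \<eta> fstar adv sel T =
     - measure_pmf.expectation (fgts_traj F N K \<eta> fstar adv sel T)
       (\<lambda>h. ln (measure_pmf.expectation (pmf_of_set F)
          (\<lambda>f. exp (- \<eta> * (\<Sum>rd\<leftarrow>h. loss_est N K \<eta> f rd - loss_est N K \<eta> fstar rd)))))"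

end

theory Submission
  imports Defs
begin

text \<open>The proof follows the potential
  \<open>\<Phi>(h) = (regret accumulated along h) + ln W(h) / \<eta>\<close>, where
  \<open>W(h) = E\<^sub>f\<^sub>~\<^sub>p\<^sub>1 exp (-\<eta> \<Sum>\<^sub>t (\<ell>\<^sub>t\<^sub>,\<^sub>f - \<ell>\<^sub>t\<^sub>,\<^sub>f\<^sub>\<star>))\<close>, so that the regret is
  \<open>E \<Phi>(h\<^sub>T) + Z\<^sub>T / \<eta>\<close>. The ratio \<open>W(h\<^sub>t\<^sub>+\<^sub>1) / W(h\<^sub>t)\<close> is an expectation under the
  posterior, so it suffices to show that \<open>\<Phi>\<close> grows by at most \<open>(12NK(K+1)\<^sup>4 + 4)\<eta>\<close> per round
  in expectation. Bounding the log-moment generating function of the loss difference, its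
  feel-good part turns the regret against \<open>f\<^sup>\<star>\<close> into the revenue gap of the sampled model at its
  own optimal assortment, while its squared-loss part contributes minus a multiple of the
  expected squared distance between the choice probabilities of \<open>f\<close> and \<open>f\<^sup>\<star>\<close>. The revenue
  gap is Lipschitz in the preferences; after decoupling the sampled model from the compared one
  by AM-GM and Cauchy-Schwarz and inverting the MNL map (which costs \<open>(K+1)\<^sup>4\<close>), it is paid for
  by the negative term.\<close>

lemma exp_bound_abs_le_1:
  fixes x :: real
  assumes "\<bar>x\<bar> \<le> 1"
  shows "exp x \<le> 1 + x + x\<^sup>2"
proof (cases "0 \<le> x")
  case True
  then show ?thesis using exp_bound assms by auto
next
  case False
  define t where "t = - x"
  have t: "0 \<le> t" "t \<le> 1" using False assms t_def by auto
  have pos: "0 < 1 + t + t\<^sup>2/2" using t by (simp add: add_pos_nonneg)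
  have "exp x = 1 / exp t" by (simp add: t_def exp_minus field_simps)
  also have "\<dots> \<le> 1 / (1 + t + t\<^sup>2/2)"
    using exp_lower_Taylor_quadratic[OF t(1)] pos by (simp add: frac_le)
  also have "\<dots> \<le> 1 - t + t\<^sup>2/2"
  proof -
    have "1 \<le> (1 - t + t\<^sup>2/2) * (1 + t + t\<^sup>2/2)"
      by (simp add: power2_eq_square algebra_simps) (smt (verit) mult_nonneg_nonneg t(1))
    then show ?thesis using pos by (simp add: divide_le_eq)
  qed
  also have "\<dots> \<le> 1 + x + x\<^sup>2" using t_def by (simp add: power2_eq_square)
  finally show ?thesis .
qed

lemma exp_bound_abs_le_2:
  fixes x :: real
  assumes "\<bar>x\<bar> \<le> 2"
  shows "exp x \<le> 1 + x + 3/2 * x\<^sup>2"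
proof -
  have "exp x = (exp (x/2))\<^sup>2" by (simp add: power2_eq_square exp_add[symmetric])
  also have "\<dots> \<le> (1 + x/2 + (x/2)\<^sup>2)\<^sup>2"
    using exp_bound_abs_le_1[of "x/2"] assms by (intro power_mono) auto
  also have "\<dots> \<le> 1 + x + 3/2 * x\<^sup>2"
  proof -
    have "(x + 6) * (x - 2) \<le> 0" using assms by (intro mult_nonneg_nonpos) auto
    then have "x\<^sup>2 * ((x + 6) * (x - 2)) \<le> 0" by (simp add: mult_nonneg_nonpos)
    then show ?thesis by (simp add: power2_eq_square algebra_simps)
  qed
  finally show ?thesis .
qed

lemma exp_add_le_mean_exp_double:
  fixes a b :: real
  shows "exp (a + b) \<le> (exp (2 * a) + exp (2 * b)) / 2"
proof -
  have "0 \<le> (exp a - exp b)\<^sup>2" by simp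
  moreover have "exp (2 * a) = (exp a)\<^sup>2" "exp (2 * b) = (exp b)\<^sup>2" "exp (a + b) = exp a * exp b"
    by (simp_all add: power2_eq_square exp_add[symmetric])
  ultimately show ?thesis by (simp add: power2_eq_square algebra_simps)
qed

lemma le_amgm_sq:
  fixes x \<gamma> :: real
  assumes "0 < \<gamma>"
  shows "x \<le> \<gamma>/2 + x\<^sup>2 / (2 * \<gamma>)"
proof -
  have "0 \<le> (x - \<gamma>)\<^sup>2" by simp
  then have "2 * \<gamma> * x \<le> x\<^sup>2 + \<gamma>\<^sup>2" by (simp add: power2_eq_square algebra_simps)
  then show ?thesis using assms by (simp add: field_simps power2_eq_square)
qed

lemma weighted_Cauchy_Schwarz_sum:
  fixes p a b :: "'a \<Rightarrow> real"
  assumes "\<And>x. x \<in> A \<Longrightarrow> 0 \<le> p x"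
  shows "(\<Sum>x\<in>A. p x * a x * b x)\<^sup>2 \<le> (\<Sum>x\<in>A. p x * (a x)\<^sup>2) * (\<Sum>x\<in>A. p x * (b x)\<^sup>2)"
proof -
  have "(\<Sum>x\<in>A. p x * a x * b x) = (\<Sum>x\<in>A. (sqrt (p x) * a x) * (sqrt (p x) * b x))"
    using assms by (intro sum.cong) (auto simp: algebra_simps real_sqrt_mult[symmetric])
  moreover have "(\<Sum>x\<in>A. p x * (c x)\<^sup>2) = (\<Sum>x\<in>A. (sqrt (p x) * c x)\<^sup>2)" for c
    using assms by (intro sum.cong) (auto simp: power_mult_distrib)
  ultimately show ?thesis using Cauchy_Schwarz_ineq_sum by metis
qed

lemma sum_weighted_pos:
  fixes p g :: "'a \<Rightarrow> real"
  assumes "finite A" "\<And>x. x \<in> A \<Longrightarrow> 0 \<le> p x" "(\<Sum>x\<in>A. p x) = 1"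
    and "\<And>x. x \<in> A \<Longrightarrow> 0 < g x"
  shows "0 < (\<Sum>x\<in>A. p x * g x)"
proof -
  obtain x where x: "x \<in> A" "0 < p x"
    using assms(2,3) by (metis less_eq_real_def sum.neutral zero_neq_one)
  show ?thesis
    using assms(2,4) x by (intro sum_pos2[OF assms(1) x(1)]) (auto simp: less_imp_le)
qed

lemma sum_weighted_add_const:
  fixes q g :: "'a \<Rightarrow> real"
  assumes "(\<Sum>x\<in>A. q x) = 1"
  shows "(\<Sum>x\<in>A. q x * (c + g x)) = c + (\<Sum>x\<in>A. q x * g x)"
  by (simp add: distrib_left sum.distrib sum_distrib_right[symmetric] assms)

lemma ln_expectation_exp_le:
  fixes p X B :: "'a \<Rightarrow> real" and \<eta> :: real
  assumes "finite F" and p: "\<And>f. f \<in> F \<Longrightarrow> 0 \<le> p f" "(\<Sum>f\<in>F. p f) = 1"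
    and X: "\<And>f. f \<in> F \<Longrightarrow> \<bar>X f\<bar> \<le> 1" and \<eta>: "0 < \<eta>" "\<eta> \<le> 1"
  shows "ln (\<Sum>f\<in>F. p f * exp (\<eta> * X f + B f))
           \<le> \<eta> * (\<Sum>f\<in>F. p f * X f) + 3 * \<eta>\<^sup>2 + ((\<Sum>f\<in>F. p f * exp (2 * B f)) - 1) / 2"
proof -
  have exp_X: "exp (2 * (\<eta> * X f)) \<le> 1 + 2 * \<eta> * X f + 6 * \<eta>\<^sup>2" if "f \<in> F" for f
  proof -
    have "\<bar>2 * (\<eta> * X f)\<bar> \<le> 2" using X[OF that] \<eta> by (simp add: abs_mult mult_le_one)
    from exp_bound_abs_le_2[OF this]
    have "exp (2 * (\<eta> * X f)) \<le> 1 + 2 * \<eta> * X f + 6 * (\<eta>\<^sup>2 * (X f)\<^sup>2)"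
      by (simp add: power2_eq_square algebra_simps)
    moreover have "\<eta>\<^sup>2 * (X f)\<^sup>2 \<le> \<eta>\<^sup>2"
      using X[OF that] abs_le_square_iff[of "X f" 1] by (simp add: mult_left_le)
    ultimately show ?thesis by linarith
  qed
  have "(\<Sum>f\<in>F. p f * exp (\<eta> * X f + B f))
      \<le> (\<Sum>f\<in>F. p f * ((exp (2 * (\<eta> * X f)) + exp (2 * B f)) / 2))"
    using p(1) exp_add_le_mean_exp_double by (intro sum_mono mult_left_mono) auto
  also have "\<dots> \<le> (\<Sum>f\<in>F. p f * ((1 + 2 * \<eta> * X f + 6 * \<eta>\<^sup>2 + exp (2 * B f)) / 2))"
    using p(1) exp_X by (intro sum_mono mult_left_mono divide_right_mono add_right_mono) auto
  also have "\<dots> = (1 + 2 * \<eta> * (\<Sum>f\<in>F. p f * X f) + 6 * \<eta>\<^sup>2 + (\<Sum>f\<in>F. p f * exp (2 * B f))) / 2"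
    using p(2) by (simp add: algebra_simps sum.distrib sum_distrib_left sum_distrib_right[symmetric] sum_divide_distrib[symmetric])
  finally have le: "(\<Sum>f\<in>F. p f * exp (\<eta> * X f + B f)) \<le> \<dots>" .
  have "0 < (\<Sum>f\<in>F. p f * exp (\<eta> * X f + B f))"
    using assms(1) p by (intro sum_weighted_pos) auto
  from ln_le_minus_one[OF this] le show ?thesis by (simp add: field_simps)
qed

lemma decoupling_bound:
  fixes p :: "'a \<Rightarrow> real" and S :: "'a \<Rightarrow> nat set" and d :: "'a \<Rightarrow> nat \<Rightarrow> real" and \<gamma> :: real
  assumes "finite F" "\<And>f. f \<in> F \<Longrightarrow> 0 \<le> p f" "0 < \<gamma>" "\<And>g. g \<in> F \<Longrightarrow> S g \<subseteq> {1..N}"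
  shows "(\<Sum>g\<in>F. p g * (\<Sum>i\<in>S g. \<bar>d g i\<bar>))
           \<le> real N * \<gamma> / 2 + (\<Sum>g\<in>F. p g * (\<Sum>f\<in>F. p f * (\<Sum>i\<in>S g. (d f i)\<^sup>2))) / (2 * \<gamma>)"
proof -
  define ind where "ind g i = (if i \<in> S g then 1 else 0 :: real)" for g i
  have restrict: "(\<Sum>i\<in>S g. u i) = (\<Sum>i\<in>{1..N}. ind g i * u i)" if "g \<in> F" for g and u :: "nat \<Rightarrow> real"
  proof -
    have "(\<Sum>i\<in>{1..N}. ind g i * u i) = (\<Sum>i\<in>{1..N} \<inter> S g. u i)"
      unfolding sum.inter_restrict[OF finite_atLeastAtMost] ind_def by (intro sum.cong) auto
    then show ?thesis using assms(4)[OF that] by (simp add: Int_absorb1)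
  qed
  define x where "x i = (\<Sum>g\<in>F. p g * ind g i * \<bar>d g i\<bar>)" for i
  define y where "y i = (\<Sum>g\<in>F. \<Sum>f\<in>F. p g * p f * ind g i * (d f i)\<^sup>2)" for i
  have x_sq: "(x i)\<^sup>2 \<le> y i" for i
  proof -
    have "(x i)\<^sup>2 \<le> (\<Sum>g\<in>F. p g * (ind g i)\<^sup>2) * (\<Sum>f\<in>F. p f * \<bar>d f i\<bar>\<^sup>2)"
      unfolding x_def by (rule weighted_Cauchy_Schwarz_sum[OF assms(2)])
    also have "\<dots> = y i"
      unfolding y_def sum_product by (intro sum.cong refl) (simp add: ind_def)
    finally show ?thesis .
  qed
  have "(\<Sum>g\<in>F. p g * (\<Sum>i\<in>S g. \<bar>d g i\<bar>)) = (\<Sum>i\<in>{1..N}. x i)"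
    unfolding x_def using restrict
    by (simp add: sum_distrib_left sum.swap[of _ F] mult.assoc cong: sum.cong)
  also have "\<dots> \<le> (\<Sum>i\<in>{1..N}. \<gamma> / 2 + y i / (2 * \<gamma>))"
    using le_amgm_sq[OF assms(3)] x_sq assms(3)
    by (intro sum_mono) (meson add_left_mono divide_right_mono order_trans zero_le_mult_iff less_imp_le zero_le_numeral)
  also have "\<dots> = real N * \<gamma> / 2 + (\<Sum>i\<in>{1..N}. y i) / (2 * \<gamma>)"
    by (simp add: sum.distrib sum_divide_distrib[symmetric])
  also have "(\<Sum>i\<in>{1..N}. y i) = (\<Sum>g\<in>F. \<Sum>i\<in>{1..N}. \<Sum>f\<in>F. p g * p f * ind g i * (d f i)\<^sup>2)"
    unfolding y_def by (rule sum.swap)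
  also have "\<dots> = (\<Sum>g\<in>F. \<Sum>f\<in>F. p g * (p f * (\<Sum>i\<in>{1..N}. ind g i * (d f i)\<^sup>2)))"
    by (intro sum.cong refl, subst sum.swap) (simp add: sum_distrib_left mult.assoc)
  also have "\<dots> = (\<Sum>g\<in>F. p g * (\<Sum>f\<in>F. p f * (\<Sum>i\<in>S g. (d f i)\<^sup>2)))"
    using restrict by (simp add: sum_distrib_left)
  finally show ?thesis .
qed

lemma expectation_pmf_finite:
  fixes g :: "'a \<Rightarrow> real"
  assumes "finite A" "set_pmf M \<subseteq> A"
  shows "measure_pmf.expectation M g = (\<Sum>a\<in>A. pmf M a * g a)"
  using integral_measure_pmf[OF assms(1), of M g] assms(2) by auto

lemma
  fixes f :: "'a \<Rightarrow> real"
  assumes "finite A" "\<And>x. x \<notin> A \<Longrightarrow> f x = 0" "\<And>x. 0 \<le> f x" "(\<Sum>x\<in>A. f x) = 1"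
  shows pmf_embed_pmf_finite: "pmf (embed_pmf f) x = f x"
    and set_embed_pmf_finite: "set_pmf (embed_pmf f) \<subseteq> A"
proof -
  have "(\<integral>\<^sup>+x. ennreal (f x) \<partial>count_space UNIV) = (\<Sum>x\<in>A. ennreal (f x))"
    using assms by (intro nn_integral_count_space') auto
  also have "\<dots> = 1" using assms by (simp add: sum_ennreal[symmetric])
  finally have total: "(\<integral>\<^sup>+x. ennreal (f x) \<partial>count_space UNIV) = 1" .
  show "pmf (embed_pmf f) x = f x" by (rule pmf_embed_pmf[OF assms(3) total])
  show "set_pmf (embed_pmf f) \<subseteq> A" using set_embed_pmf[OF assms(3) total] assms(2) by auto
qed

section \<open>The multinomial logit model\<close>

locale mnl_choice =
  fixes S :: "nat set" and v :: "nat \<Rightarrow> real"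
  assumes finite_S: "finite S" and zero_not_in_S: "0 \<notin> S"
    and v_nonneg: "\<And>j. j \<in> S \<Longrightarrow> 0 \<le> v j"
begin

definition "Z = 1 + (\<Sum>j\<in>S. v j)"

lemma Z_ge_1: "1 \<le> Z"
  unfolding Z_def using v_nonneg by (simp add: sum_nonneg)

lemma Z_pos: "0 < Z"
  using Z_ge_1 by simp

lemma mnl_prob_item: "i \<in> S \<Longrightarrow> mnl_prob S v i = v i / Z"
  unfolding mnl_prob_def Z_def by simp

lemma mnl_prob_zero: "mnl_prob S v 0 = 1 / Z"
  unfolding mnl_prob_def Z_def using zero_not_in_S by simp

lemma mnl_prob_outside: "i \<notin> insert 0 S \<Longrightarrow> mnl_prob S v i = 0"
  unfolding mnl_prob_def by simp

lemma mnl_prob_nonneg: "0 \<le> mnl_prob S v i"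
  unfolding mnl_prob_def using v_nonneg Z_pos unfolding Z_def by (auto simp: sum_nonneg)

lemma sum_mnl_prob_items: "(\<Sum>i\<in>S. mnl_prob S v i) = (Z - 1) / Z"
  by (simp add: mnl_prob_item sum_divide_distrib[symmetric] Z_def)

lemma sum_mnl_prob_items_le_1: "(\<Sum>i\<in>S. mnl_prob S v i) \<le> 1"
  using sum_mnl_prob_items Z_pos by (simp add: divide_le_eq)

lemma sum_mnl_prob: "(\<Sum>i\<in>insert 0 S. mnl_prob S v i) = 1"
  using zero_not_in_S finite_S Z_pos
  by (simp add: sum_mnl_prob_items mnl_prob_zero add_divide_distrib[symmetric])

lemma mnl_prob_zero_eq: "mnl_prob S v 0 = 1 - (\<Sum>i\<in>S. mnl_prob S v i)"
  using sum_mnl_prob zero_not_in_S finite_S by simp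

lemma mnl_prob_le_half:
  assumes "\<And>j. j \<in> S \<Longrightarrow> v j \<le> 1" and "i \<in> S"
  shows "mnl_prob S v i \<le> 1/2"
proof -
  have "v i \<le> (\<Sum>j\<in>S. v j)" using assms(2) finite_S v_nonneg by (intro member_le_sum) auto
  then have "2 * v i \<le> Z" using assms unfolding Z_def by force
  then show ?thesis using mnl_prob_item[OF assms(2)] Z_pos by (simp add: divide_le_eq)
qed

lemma
  shows pmf_mnl_pmf: "pmf (mnl_pmf S v) i = mnl_prob S v i"
    and set_mnl_pmf: "set_pmf (mnl_pmf S v) \<subseteq> insert 0 S"
  unfolding mnl_pmf_def
  using pmf_embed_pmf_finite[of "insert 0 S" "mnl_prob S v"] set_embed_pmf_finite[of "insert 0 S" "mnl_prob S v"]
    finite_S mnl_prob_outside mnl_prob_nonneg sum_mnl_prob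
  by auto

lemma finite_set_mnl_pmf: "finite (set_pmf (mnl_pmf S v))"
  using finite_subset[OF set_mnl_pmf] finite_S by simp

lemma expectation_mnl_pmf:
  "measure_pmf.expectation (mnl_pmf S v) g = (\<Sum>i\<in>insert 0 S. mnl_prob S v i * g i)"
  using expectation_pmf_finite[OF _ set_mnl_pmf] finite_S by (simp add: pmf_mnl_pmf)

end

lemma mnl_rev_bounds:
  fixes v r :: "nat \<Rightarrow> real"
  assumes "\<And>j. j \<in> S \<Longrightarrow> 0 \<le> v j \<and> 0 \<le> r j \<and> r j \<le> 1"
  shows "0 \<le> mnl_rev S v r" "mnl_rev S v r \<le> 1"
proof -
  have Z: "0 < 1 + (\<Sum>j\<in>S. v j)" using assms by (simp add: add_pos_nonneg sum_nonneg)
  have "(\<Sum>j\<in>S. r j * v j) \<le> (\<Sum>j\<in>S. v j)"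
    using assms by (intro sum_mono) (auto intro!: mult_left_le_one_le)
  then show "mnl_rev S v r \<le> 1" unfolding mnl_rev_def using Z by (simp add: divide_le_eq)
  show "0 \<le> mnl_rev S v r" unfolding mnl_rev_def using Z assms by (auto intro!: divide_nonneg_pos sum_nonneg)
qed

lemma mnl_rev_diff_eq:
  fixes S :: "nat set" and v w r :: "nat \<Rightarrow> real"
  defines "Zv \<equiv> 1 + (\<Sum>i\<in>S. v i)" and "Zw \<equiv> 1 + (\<Sum>i\<in>S. w i)"
  assumes "0 < Zv" "0 < Zw"
  shows "mnl_rev S v r - mnl_rev S w r = (\<Sum>i\<in>S. (v i - w i) * (r i - mnl_rev S w r)) / Zv"
proof -
  define R where "R = mnl_rev S w r"
  have RZ: "R * Zw = (\<Sum>i\<in>S. r i * w i)" unfolding R_def mnl_rev_def using assms(4) by (simp add: Zw_def)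
  have "(\<Sum>i\<in>S. (v i - w i) * (r i - R)) = (\<Sum>i\<in>S. r i * v i) - (\<Sum>i\<in>S. r i * w i)
       - R * ((\<Sum>i\<in>S. v i) - (\<Sum>i\<in>S. w i))"
    by (simp add: left_diff_distrib right_diff_distrib sum_subtractf sum_distrib_left mult.commute)
  also have "\<dots> = (\<Sum>i\<in>S. r i * v i) - R * Zv"
    unfolding RZ[symmetric] Zv_def Zw_def by (simp add: algebra_simps)
  finally show ?thesis
    using assms(3) unfolding R_def[symmetric] by (simp add: mnl_rev_def Zv_def[symmetric] field_simps)
qed

lemma mnl_rev_diff_le:
  fixes v w r :: "nat \<Rightarrow> real"
  assumes bounds: "\<And>i. i \<in> S \<Longrightarrow> 0 \<le> v i \<and> 0 \<le> w i \<and> 0 \<le> r i \<and> r i \<le> 1"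
  shows "mnl_rev S v r - mnl_rev S w r \<le> (\<Sum>i\<in>S. \<bar>v i - w i\<bar>)"
proof -
  define Zv where "Zv = 1 + (\<Sum>i\<in>S. v i)"
  define R where "R = mnl_rev S w r"
  define D where "D = (\<Sum>i\<in>S. (v i - w i) * (r i - R))"
  have Zv: "1 \<le> Zv" unfolding Zv_def using bounds by (simp add: sum_nonneg)
  have Zw: "0 < 1 + (\<Sum>i\<in>S. w i)" using bounds by (simp add: add_pos_nonneg sum_nonneg)
  have R: "0 \<le> R" "R \<le> 1"
    unfolding R_def using bounds by (intro mnl_rev_bounds; auto)+
  have "D \<le> (\<Sum>i\<in>S. \<bar>v i - w i\<bar>)"
    unfolding D_def
  proof (intro sum_mono)
    fix i assume i: "i \<in> S"
    have "\<bar>r i - R\<bar> \<le> 1" using bounds[OF i] R by (auto simp: abs_le_iff)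
    then have "\<bar>v i - w i\<bar> * \<bar>r i - R\<bar> \<le> \<bar>v i - w i\<bar>"
      by (simp add: mult_left_le)
    then show "(v i - w i) * (r i - R) \<le> \<bar>v i - w i\<bar>" by (simp add: abs_mult[symmetric])
  qed
  moreover have "D / Zv \<le> max D 0" using Zv
    by (cases "0 \<le> D") (auto simp: divide_le_eq mult_le_cancel_left1 divide_nonpos_pos)
  moreover have "0 \<le> (\<Sum>i\<in>S. \<bar>v i - w i\<bar>)" by (simp add: sum_nonneg)
  moreover have "mnl_rev S v r - mnl_rev S w r = D / Zv"
    unfolding D_def R_def Zv_def using Zv Zw by (intro mnl_rev_diff_eq) (auto simp: Zv_def)
  ultimately show ?thesis by linarith
qed

lemma pref_diff_eq_mnl_prob_diff:
  fixes S :: "nat set" and v w :: "nat \<Rightarrow> real"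
  defines "d \<equiv> \<lambda>i. mnl_prob S v i - mnl_prob S w i"
  assumes "mnl_choice S v" "mnl_choice S w" "i \<in> S"
  shows "v i - w i = (1 + (\<Sum>j\<in>S. v j)) * (d i + w i * (\<Sum>j\<in>S. d j))"
proof -
  interpret V: mnl_choice S v by fact
  interpret W: mnl_choice S w by fact
  have "(\<Sum>j\<in>S. d j) = (V.Z - 1) / V.Z - (W.Z - 1) / W.Z"
    unfolding d_def by (simp add: sum_subtractf V.sum_mnl_prob_items W.sum_mnl_prob_items)
  also have "\<dots> = 1 / W.Z - 1 / V.Z"
    using V.Z_pos W.Z_pos by (simp add: field_simps)
  finally have sum_d: "(\<Sum>j\<in>S. d j) = 1 / W.Z - 1 / V.Z" .
  show ?thesis
    unfolding sum_d unfolding d_def V.mnl_prob_item[OF \<open>i \<in> S\<close>] W.mnl_prob_item[OF \<open>i \<in> S\<close>] V.Z_def[symmetric]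
    using V.Z_pos W.Z_pos by (simp add: field_simps)
qed

text \<open>Inverse Lipschitz bound for \<open>v \<mapsto> \<mu>(S,v)\<close>; this is the source of the factor \<open>(K+1)\<^sup>4\<close>.\<close>

lemma sum_sq_pref_diff_le:
  fixes S :: "nat set" and v w :: "nat \<Rightarrow> real"
  assumes "mnl_choice S v" "mnl_choice S w"
    and le_1: "\<And>i. i \<in> S \<Longrightarrow> v i \<le> 1 \<and> w i \<le> 1"
  shows "(\<Sum>i\<in>S. (v i - w i)\<^sup>2)
           \<le> (real (card S) + 1) ^ 4 * (\<Sum>i\<in>S. (mnl_prob S v i - mnl_prob S w i)\<^sup>2)"
proof -
  interpret V: mnl_choice S v by fact
  interpret W: mnl_choice S w by fact
  define k where "k = real (card S)"
  define d where "d i = mnl_prob S v i - mnl_prob S w i" for i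
  define s where "s = (\<Sum>j\<in>S. \<bar>d j\<bar>)"
  define Q where "Q = (\<Sum>j\<in>S. (d j)\<^sup>2)"
  have Z_le: "V.Z \<le> 1 + k"
    using le_1 sum_mono[of S v "\<lambda>_. 1"] unfolding V.Z_def k_def by auto
  have pointwise: "(v i - w i)\<^sup>2 \<le> (1 + k)\<^sup>2 * (\<bar>d i\<bar> + s)\<^sup>2" if i: "i \<in> S" for i
  proof -
    have "\<bar>w i * (\<Sum>j\<in>S. d j)\<bar> \<le> 1 * s"
      unfolding abs_mult s_def using le_1[OF i] W.v_nonneg[OF i]
      by (intro mult_mono sum_abs) auto
    then have "\<bar>d i + w i * (\<Sum>j\<in>S. d j)\<bar> \<le> \<bar>d i\<bar> + s" by linarith
    then have "\<bar>v i - w i\<bar> \<le> (1 + k) * (\<bar>d i\<bar> + s)"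
      unfolding pref_diff_eq_mnl_prob_diff[OF assms(1,2) i] V.Z_def[symmetric] d_def[symmetric] abs_mult
      using V.Z_ge_1 Z_le by (intro mult_mono) auto
    then show ?thesis by (metis power_mult_distrib power_mono abs_ge_zero power2_abs)
  qed
  have s_sq: "s\<^sup>2 \<le> k * Q"
    using Cauchy_Schwarz_ineq_sum[of "\<lambda>_. 1" "\<lambda>j. \<bar>d j\<bar>" S] unfolding s_def k_def Q_def by simp
  have "(\<Sum>i\<in>S. (v i - w i)\<^sup>2) \<le> (\<Sum>i\<in>S. (1 + k)\<^sup>2 * (\<bar>d i\<bar> + s)\<^sup>2)"
    using pointwise by (intro sum_mono)
  also have "\<dots> = (1 + k)\<^sup>2 * (Q + (2 + k) * s\<^sup>2)"
    unfolding sum_distrib_left[symmetric] power2_sum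
    by (simp add: sum.distrib Q_def k_def sum_distrib_left[symmetric] sum_distrib_right[symmetric] s_def[symmetric]
        power2_eq_square algebra_simps)
  also have "\<dots> \<le> (1 + k)\<^sup>2 * (Q + (2 + k) * (k * Q))"
    using s_sq by (intro mult_left_mono add_left_mono) (auto simp: k_def)
  also have "\<dots> = (k + 1) ^ 4 * Q" by (simp add: power2_eq_square power4_eq_xxxx algebra_simps)
  finally show ?thesis unfolding Q_def d_def k_def .
qed

section \<open>The squared loss\<close>

definition sq_loss :: "nat set \<Rightarrow> (nat \<Rightarrow> real) \<Rightarrow> nat \<Rightarrow> real" where
  "sq_loss S c i = (\<Sum>j\<in>S. (c j - (if j = i then 1 else 0))\<^sup>2)"

lemma sq_loss_mem:
  assumes "finite S" "i \<in> S"
  shows "sq_loss S c i = (\<Sum>j\<in>S. (c j)\<^sup>2) - 2 * c i + 1"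
proof -
  have "sq_loss S c i = (\<Sum>j\<in>S. (c j)\<^sup>2 + (if j = i then 1 - 2 * c j else 0))"
    unfolding sq_loss_def by (rule sum.cong) (auto simp: power2_eq_square algebra_simps)
  then show ?thesis using assms by (simp add: sum.distrib)
qed

lemma sq_loss_not_mem: "i \<notin> S \<Longrightarrow> sq_loss S c i = (\<Sum>j\<in>S. (c j)\<^sup>2)"
  unfolding sq_loss_def by (intro sum.cong) auto

lemma loss_est_eq:
  "loss_est N K \<eta> f (g, x, r, S, i)
     = sq_loss S (mnl_prob S (f x)) i / (8 * \<eta> * real K) - max_rev N K (f x) r"
  unfolding loss_est_def sq_loss_def by simp

lemma sq_loss_gap_first_moment:
  fixes a b :: "nat \<Rightarrow> real"
  assumes "finite S" "0 \<notin> S"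
  shows "(1 - (\<Sum>j\<in>S. b j)) * (sq_loss S a 0 - sq_loss S b 0)
           + (\<Sum>i\<in>S. b i * (sq_loss S a i - sq_loss S b i))
         = (\<Sum>j\<in>S. (a j - b j)\<^sup>2)"
proof -
  define C where "C = (\<Sum>j\<in>S. (a j)\<^sup>2 - (b j)\<^sup>2)"
  have "(\<Sum>i\<in>S. b i * (sq_loss S a i - sq_loss S b i)) = (\<Sum>i\<in>S. b i * C - 2 * (b i * (a i - b i)))"
    using assms by (intro sum.cong) (simp_all add: sq_loss_mem C_def sum_subtractf algebra_simps)
  also have "\<dots> = (\<Sum>j\<in>S. b j) * C - 2 * (\<Sum>i\<in>S. b i * (a i - b i))"
    by (simp add: sum_subtractf sum_distrib_left sum_distrib_right)
  finally have "(1 - (\<Sum>j\<in>S. b j)) * (sq_loss S a 0 - sq_loss S b 0)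
      + (\<Sum>i\<in>S. b i * (sq_loss S a i - sq_loss S b i)) = C - 2 * (\<Sum>i\<in>S. b i * (a i - b i))"
    using assms by (simp add: sq_loss_not_mem C_def sum_subtractf algebra_simps)
  also have "\<dots> = (\<Sum>j\<in>S. (a j - b j)\<^sup>2)"
    unfolding C_def sum_distrib_left sum_subtractf[symmetric]
    by (intro sum.cong) (auto simp: power2_eq_square algebra_simps)
  finally show ?thesis .
qed

lemma sq_loss_gap_second_moment:
  fixes a b :: "nat \<Rightarrow> real"
  assumes "finite S" "0 \<notin> S" "\<And>j. j \<in> S \<Longrightarrow> b j \<le> 1/2"
  defines "A \<equiv> \<Sum>j\<in>S. (a j - b j)\<^sup>2"
  shows "(1 - (\<Sum>j\<in>S. b j)) * (sq_loss S a 0 - sq_loss S b 0)\<^sup>2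
           + (\<Sum>i\<in>S. b i * (sq_loss S a i - sq_loss S b i)\<^sup>2)
         \<le> A\<^sup>2 + 2 * A"
proof -
  define C where "C = (\<Sum>j\<in>S. (a j)\<^sup>2 - (b j)\<^sup>2)"
  define m where "m = (\<Sum>j\<in>S. b j * (a j - b j))"
  define Q where "Q = (\<Sum>j\<in>S. b j * (a j - b j)\<^sup>2)"
  have "(\<Sum>i\<in>S. b i * (sq_loss S a i - sq_loss S b i)\<^sup>2)
      = (\<Sum>i\<in>S. b i * C\<^sup>2 - 4 * C * (b i * (a i - b i)) + 4 * (b i * (a i - b i)\<^sup>2))"
    using assms(1,2) by (intro sum.cong)
      (simp_all add: sq_loss_mem C_def sum_subtractf power2_eq_square algebra_simps)
  also have "\<dots> = (\<Sum>j\<in>S. b j) * C\<^sup>2 - 4 * C * m + 4 * Q"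
    by (simp add: sum.distrib sum_subtractf sum_distrib_left sum_distrib_right m_def Q_def)
  finally have "(1 - (\<Sum>j\<in>S. b j)) * (sq_loss S a 0 - sq_loss S b 0)\<^sup>2
      + (\<Sum>i\<in>S. b i * (sq_loss S a i - sq_loss S b i)\<^sup>2) = C\<^sup>2 - 4 * C * m + 4 * Q"
    using assms(2) by (simp add: sq_loss_not_mem C_def sum_subtractf algebra_simps)
  also have "C\<^sup>2 - 4 * C * m = A\<^sup>2 - 4 * m\<^sup>2"
  proof -
    have "C = A + 2 * m"
      unfolding A_def C_def m_def sum_distrib_left sum.distrib[symmetric]
      by (intro sum.cong) (auto simp: power2_eq_square algebra_simps)
    then show ?thesis by (simp add: power2_eq_square algebra_simps)
  qed
  also have "A\<^sup>2 - 4 * m\<^sup>2 + 4 * Q \<le> A\<^sup>2 + 2 * A"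
  proof -
    have "Q \<le> A / 2"
      unfolding Q_def A_def sum_divide_distrib
    proof (intro sum_mono)
      fix j assume "j \<in> S"
      then have "b j * (a j - b j)\<^sup>2 \<le> 1/2 * (a j - b j)\<^sup>2"
        using assms(3) by (intro mult_right_mono) auto
      then show "b j * (a j - b j)\<^sup>2 \<le> (a j - b j)\<^sup>2 / 2" by simp
    qed
    then show ?thesis using zero_le_power2[of m] by linarith
  qed
  finally show ?thesis .
qed

lemma sum_sq_le_half_sum:
  fixes c :: "nat \<Rightarrow> real"
  assumes "\<And>j. j \<in> S \<Longrightarrow> 0 \<le> c j \<and> c j \<le> 1/2"
  shows "(\<Sum>j\<in>S. (c j)\<^sup>2) \<le> (\<Sum>j\<in>S. c j) / 2"
  unfolding sum_divide_distrib
proof (intro sum_mono)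
  fix j assume "j \<in> S"
  then have "c j * c j \<le> c j * (1/2)" using assms by (intro mult_left_mono) auto
  then show "(c j)\<^sup>2 \<le> c j / 2" by (simp add: power2_eq_square)
qed

lemma sq_loss_gap_abs_le:
  fixes a b :: "nat \<Rightarrow> real"
  assumes "finite S" "0 \<notin> S"
    and bounds: "\<And>j. j \<in> S \<Longrightarrow> 0 \<le> a j \<and> a j \<le> 1/2 \<and> 0 \<le> b j \<and> b j \<le> 1/2"
    and "(\<Sum>j\<in>S. a j) \<le> 1" "(\<Sum>j\<in>S. b j) \<le> 1" "i \<in> insert 0 S"
  shows "\<bar>sq_loss S a i - sq_loss S b i\<bar> \<le> 3/2"
proof -
  define C where "C = (\<Sum>j\<in>S. (a j)\<^sup>2) - (\<Sum>j\<in>S. (b j)\<^sup>2)"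
  have "-1/2 \<le> C" "C \<le> 1/2"
    using sum_sq_le_half_sum[of S a] sum_sq_le_half_sum[of S b] bounds assms(4,5)
      sum_nonneg[of S "\<lambda>j. (a j)\<^sup>2"] sum_nonneg[of S "\<lambda>j. (b j)\<^sup>2"]
    unfolding C_def by auto
  show ?thesis
  proof (cases "i = 0")
    case True
    then have "sq_loss S a i - sq_loss S b i = C" using assms(2) by (simp add: sq_loss_not_mem C_def)
    then show ?thesis using \<open>-1/2 \<le> C\<close> \<open>C \<le> 1/2\<close> by (simp add: abs_le_iff)
  next
    case False
    then have i: "i \<in> S" using assms(6) by simp
    have "0 \<le> a i" "a i \<le> 1/2" "0 \<le> b i" "b i \<le> 1/2" using bounds[OF i] by auto
    then show ?thesis using \<open>-1/2 \<le> C\<close> \<open>C \<le> 1/2\<close>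
      unfolding sq_loss_mem[OF assms(1) i] C_def abs_le_iff by (intro conjI) linarith+
  qed
qed

text \<open>The weights \<open>1 - \<Sum> b\<close> and \<open>b i\<close> are the choice probabilities of the no-purchase
  option and of the items, so the left-hand side is an expectation over the observed choice.\<close>

lemma expectation_exp_sq_loss_gap_le:
  fixes a b :: "nat \<Rightarrow> real" and K :: real
  assumes "finite S" "0 \<notin> S"
    and bounds: "\<And>j. j \<in> S \<Longrightarrow> 0 \<le> a j \<and> a j \<le> 1/2 \<and> 0 \<le> b j \<and> b j \<le> 1/2"
    and "(\<Sum>j\<in>S. a j) \<le> 1" "(\<Sum>j\<in>S. b j) \<le> 1" "1 \<le> K"
  defines "G \<equiv> \<lambda>i. sq_loss S a i - sq_loss S b i" and "A \<equiv> \<Sum>j\<in>S. (a j - b j)\<^sup>2"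
  shows "(1 - (\<Sum>j\<in>S. b j)) * exp (- G 0 / (4 * K)) + (\<Sum>i\<in>S. b i * exp (- G i / (4 * K)))
         \<le> 1 - A / (16 * K)"
proof -
  define \<beta> where "\<beta> = 1 / (4 * K)"
  have \<beta>: "0 < \<beta>" "\<beta> \<le> 1/4" using assms(6) by (auto simp: \<beta>_def field_simps)
  have exp_G: "exp (- G i / (4 * K)) \<le> 1 - \<beta> * G i + \<beta>\<^sup>2 * (G i)\<^sup>2" if "i \<in> insert 0 S" for i
  proof -
    have "\<bar>- \<beta> * G i\<bar> \<le> 1"
      using \<beta> mult_mono[of \<beta> "1/4" "\<bar>G i\<bar>" "3/2"] sq_loss_gap_abs_le[OF assms(1-5) that]
      by (simp add: abs_mult G_def)
    from exp_bound_abs_le_1[OF this] show ?thesis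
      by (simp add: \<beta>_def power_divide)
  qed
  have A: "0 \<le> A" "A \<le> 1"
  proof -
    show "0 \<le> A" unfolding A_def by (simp add: sum_nonneg)
    have "A \<le> (\<Sum>j\<in>S. (a j)\<^sup>2) + (\<Sum>j\<in>S. (b j)\<^sup>2)"
      unfolding A_def sum.distrib[symmetric] using bounds
      by (intro sum_mono) (auto simp: power2_eq_square algebra_simps)
    then show "A \<le> 1"
      using sum_sq_le_half_sum[of S a] sum_sq_le_half_sum[of S b] bounds assms(4,5) by auto
  qed
  have "(1 - (\<Sum>j\<in>S. b j)) * exp (- G 0 / (4 * K)) + (\<Sum>i\<in>S. b i * exp (- G i / (4 * K)))
      \<le> (1 - (\<Sum>j\<in>S. b j)) * (1 - \<beta> * G 0 + \<beta>\<^sup>2 * (G 0)\<^sup>2)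
        + (\<Sum>i\<in>S. b i * (1 - \<beta> * G i + \<beta>\<^sup>2 * (G i)\<^sup>2))"
    using exp_G bounds assms(5) by (intro add_mono mult_left_mono sum_mono) auto
  also have "\<dots> = 1 - \<beta> * ((1 - (\<Sum>j\<in>S. b j)) * G 0 + (\<Sum>i\<in>S. b i * G i))
      + \<beta>\<^sup>2 * ((1 - (\<Sum>j\<in>S. b j)) * (G 0)\<^sup>2 + (\<Sum>i\<in>S. b i * (G i)\<^sup>2))"
    by (simp add: algebra_simps sum.distrib sum_subtractf sum_distrib_left)
  also have "\<dots> \<le> 1 - \<beta> * A + \<beta>\<^sup>2 * (A\<^sup>2 + 2 * A)"
    using sq_loss_gap_first_moment[OF assms(1,2), of b a]
      sq_loss_gap_second_moment[OF assms(1,2), of b a] bounds mult_left_mono[of _ _ "\<beta>\<^sup>2"]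
    unfolding G_def A_def by auto
  also have "\<beta>\<^sup>2 * (A\<^sup>2 + 2 * A) \<le> (\<beta> * A) * (3/4)"
  proof -
    have "\<beta> * (A + 2) \<le> 1/4 * 3" using \<beta> A by (intro mult_mono) auto
    then show ?thesis
      using mult_left_mono[of "\<beta> * (A + 2)" "3/4" "\<beta> * A"] \<beta> A
      by (simp add: power2_eq_square algebra_simps)
  qed
  finally show ?thesis by (simp add: \<beta>_def)
qed

section \<open>One round of Feel-Good Thompson Sampling\<close>

lemma assortments_memD:
  assumes "S \<in> assortments N K"
  shows "finite S" "S \<subseteq> {1..N}" "0 \<notin> S" "card S \<le> K"
  using assms unfolding assortments_def by (auto intro: finite_subset)

lemma finite_assortments: "finite (assortments N K)"
  unfolding assortments_def by (rule finite_subset[of _ "Pow {1..N}"]) auto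

lemma singleton_in_assortments: "1 \<le> K \<Longrightarrow> K \<le> N \<Longrightarrow> {1} \<in> assortments N K"
  unfolding assortments_def by auto

lemma mnl_choice_assortment:
  "S \<in> assortments N K \<Longrightarrow> (\<And>j. j \<in> {1..N} \<Longrightarrow> 0 \<le> v j) \<Longrightarrow> mnl_choice S v"
  using assortments_memD[of S N K] by unfold_locales auto

lemma
  fixes v r :: "nat \<Rightarrow> real"
  assumes K: "1 \<le> K" "K \<le> N" and bounds: "\<And>j. j \<in> {1..N} \<Longrightarrow> 0 \<le> v j \<and> 0 \<le> r j \<and> r j \<le> 1"
  shows max_rev_nonneg: "0 \<le> max_rev N K v r"
    and max_rev_le_1: "max_rev N K v r \<le> 1"
proof -
  have fin: "finite ((\<lambda>S. mnl_rev S v r) ` assortments N K)" by (simp add: finite_assortments)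
  have rev: "0 \<le> mnl_rev S v r \<and> mnl_rev S v r \<le> 1" if "S \<in> assortments N K" for S
  proof -
    have "\<And>j. j \<in> S \<Longrightarrow> 0 \<le> v j \<and> 0 \<le> r j \<and> r j \<le> 1"
      using assortments_memD(2)[OF that] bounds by auto
    then show ?thesis using mnl_rev_bounds by blast
  qed
  have le: "mnl_rev S v r \<le> max_rev N K v r" if "S \<in> assortments N K" for S
    unfolding max_rev_def using fin that by (intro Max_ge) auto
  show "0 \<le> max_rev N K v r"
    using le[OF singleton_in_assortments[OF K]] rev[OF singleton_in_assortments[OF K]] by linarith
  show "max_rev N K v r \<le> 1"
    unfolding max_rev_def using fin singleton_in_assortments[OF K] rev by (subst Max_le_iff) auto
qed

text \<open>A single round at a fixed context \<open>x\<^sub>t\<close>: \<open>p\<close> is the posterior \<open>p\<^sub>t\<close>, \<open>V f = f(x\<^sub>t)\<close>,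
  \<open>v = f\<^sup>\<star>(x\<^sub>t)\<close>, \<open>r = r\<^sub>t\<close>, and \<open>Sel g\<close> is the assortment played when \<open>g\<close> is sampled.\<close>

locale fgts_round =
  fixes N K :: nat and \<eta> :: real and F :: "'f set" and p :: "'f \<Rightarrow> real"
    and V :: "'f \<Rightarrow> nat \<Rightarrow> real" and v r :: "nat \<Rightarrow> real" and Sel :: "'f \<Rightarrow> nat set"
  assumes K: "1 \<le> K" "K \<le> N" and finite_F: "finite F"
    and p_nonneg: "\<And>f. f \<in> F \<Longrightarrow> 0 \<le> p f" and sum_p: "(\<Sum>f\<in>F. p f) = 1"
    and V_bounds: "\<And>f j. f \<in> F \<Longrightarrow> j \<in> {1..N} \<Longrightarrow> 0 \<le> V f j \<and> V f j \<le> 1"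
    and v_bounds: "\<And>j. j \<in> {1..N} \<Longrightarrow> 0 \<le> v j \<and> v j \<le> 1"
    and r_bounds: "\<And>j. j \<in> {1..N} \<Longrightarrow> 0 \<le> r j \<and> r j \<le> 1"
    and Sel: "\<And>g. g \<in> F \<Longrightarrow> Sel g \<in> assortments N K \<and> mnl_rev (Sel g) (V g) r = max_rev N K (V g) r"
    and \<eta>: "0 < \<eta>" "\<eta> \<le> 1"
begin

definition loss :: "(nat \<Rightarrow> real) \<Rightarrow> nat set \<Rightarrow> nat \<Rightarrow> real" where
  "loss u S i = sq_loss S (mnl_prob S u) i / (8 * \<eta> * real K) - max_rev N K u r"

definition log_ratio :: "nat set \<Rightarrow> nat \<Rightarrow> real" where
  "log_ratio S i = ln (\<Sum>f\<in>F. p f * exp (- \<eta> * (loss (V f) S i - loss v S i)))"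

definition mnl_sqdist :: "'f \<Rightarrow> nat set \<Rightarrow> real" where
  "mnl_sqdist f S = (\<Sum>j\<in>S. (mnl_prob S (V f) j - mnl_prob S v j)\<^sup>2)"

lemma
  assumes "f \<in> F"
  shows max_rev_V_nonneg: "0 \<le> max_rev N K (V f) r" and max_rev_V_le_1: "max_rev N K (V f) r \<le> 1"
proof -
  have "\<And>j. j \<in> {1..N} \<Longrightarrow> 0 \<le> V f j \<and> 0 \<le> r j \<and> r j \<le> 1"
    using V_bounds[OF assms] r_bounds by auto
  then show "0 \<le> max_rev N K (V f) r" "max_rev N K (V f) r \<le> 1"
    using max_rev_nonneg[OF K] max_rev_le_1[OF K] by blast+
qed

lemma max_rev_v_nonneg: "0 \<le> max_rev N K v r" and max_rev_v_le_1: "max_rev N K v r \<le> 1"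
proof -
  have "\<And>j. j \<in> {1..N} \<Longrightarrow> 0 \<le> v j \<and> 0 \<le> r j \<and> r j \<le> 1"
    using v_bounds r_bounds by auto
  then show "0 \<le> max_rev N K v r" "max_rev N K v r \<le> 1"
    using max_rev_nonneg[OF K] max_rev_le_1[OF K] by blast+
qed

lemma log_ratio_le:
  "log_ratio S i \<le> \<eta> * ((\<Sum>f\<in>F. p f * max_rev N K (V f) r) - max_rev N K v r) + 3 * \<eta>\<^sup>2
     + ((\<Sum>f\<in>F. p f * exp (- (sq_loss S (mnl_prob S (V f)) i - sq_loss S (mnl_prob S v) i) / (4 * real K)))
        - 1) / 2"
proof -
  define X where "X f = max_rev N K (V f) r - max_rev N K v r" for f
  define G where "G f = sq_loss S (mnl_prob S (V f)) i - sq_loss S (mnl_prob S v) i" for f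
  define B where "B f = - G f / (8 * real K)" for f
  have "- \<eta> * (loss (V f) S i - loss v S i) = \<eta> * X f + B f" for f
  proof -
    have "\<eta> * (x / (8 * \<eta> * real K)) = x / (8 * real K)" for x using \<eta> by simp
    then show ?thesis unfolding loss_def X_def B_def G_def by (simp add: algebra_simps diff_divide_distrib)
  qed
  then have "log_ratio S i = ln (\<Sum>f\<in>F. p f * exp (\<eta> * X f + B f))"
    unfolding log_ratio_def by simp
  also have "\<dots> \<le> \<eta> * (\<Sum>f\<in>F. p f * X f) + 3 * \<eta>\<^sup>2 + ((\<Sum>f\<in>F. p f * exp (2 * B f)) - 1) / 2"
  proof (intro ln_expectation_exp_le[OF finite_F p_nonneg sum_p _ \<eta>])
    show "\<bar>X f\<bar> \<le> 1" if "f \<in> F" for f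
      using max_rev_V_nonneg[OF that] max_rev_V_le_1[OF that] max_rev_v_nonneg max_rev_v_le_1
      unfolding X_def by auto
  qed
  also have "(\<Sum>f\<in>F. p f * X f) = (\<Sum>f\<in>F. p f * max_rev N K (V f) r) - max_rev N K v r"
    unfolding X_def using sum_p by (simp add: right_diff_distrib sum_subtractf sum_distrib_right[symmetric])
  also have "(\<Sum>f\<in>F. p f * exp (2 * B f)) = (\<Sum>f\<in>F. p f * exp (- G f / (4 * real K)))"
    unfolding B_def by simp
  finally show ?thesis unfolding G_def .
qed


lemma expected_exp_sq_loss_gap_le:
  assumes "S \<in> assortments N K" "f \<in> F"
  shows "(\<Sum>i\<in>insert 0 S. mnl_prob S v i
            * exp (- (sq_loss S (mnl_prob S (V f)) i - sq_loss S (mnl_prob S v) i) / (4 * real K)))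
         \<le> 1 - mnl_sqdist f S / (16 * real K)"
proof -
  note S = assortments_memD[OF assms(1)]
  interpret Mv: mnl_choice S v using assms(1) v_bounds by (intro mnl_choice_assortment) auto
  interpret Mf: mnl_choice S "V f" using assms V_bounds by (intro mnl_choice_assortment) auto
  have "\<And>j. j \<in> S \<Longrightarrow> 0 \<le> mnl_prob S (V f) j \<and> mnl_prob S (V f) j \<le> 1/2
                      \<and> 0 \<le> mnl_prob S v j \<and> mnl_prob S v j \<le> 1/2"
    using Mf.mnl_prob_nonneg Mv.mnl_prob_nonneg S(2) assms(2) V_bounds v_bounds
      Mf.mnl_prob_le_half Mv.mnl_prob_le_half by (metis subsetD)
  from expectation_exp_sq_loss_gap_le[OF S(1,3) this Mf.sum_mnl_prob_items_le_1
      Mv.sum_mnl_prob_items_le_1] K(1)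
  show ?thesis
    using S(1,3) by (simp add: Mv.mnl_prob_zero_eq mnl_sqdist_def)
qed

lemma expected_log_ratio_le:
  assumes "S \<in> assortments N K"
  shows "(\<Sum>i\<in>insert 0 S. mnl_prob S v i * log_ratio S i)
           \<le> \<eta> * ((\<Sum>f\<in>F. p f * max_rev N K (V f) r) - max_rev N K v r) + 3 * \<eta>\<^sup>2
             - (\<Sum>f\<in>F. p f * mnl_sqdist f S) / (32 * real K)"
proof -
  interpret Mv: mnl_choice S v using assms v_bounds by (intro mnl_choice_assortment) auto
  define c where "c = \<eta> * ((\<Sum>f\<in>F. p f * max_rev N K (V f) r) - max_rev N K v r) + 3 * \<eta>\<^sup>2"
  define E where "E f i = exp (- (sq_loss S (mnl_prob S (V f)) i - sq_loss S (mnl_prob S v) i) / (4 * real K))"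
    for f i
  have "(\<Sum>i\<in>insert 0 S. mnl_prob S v i * log_ratio S i)
      \<le> (\<Sum>i\<in>insert 0 S. mnl_prob S v i * (c + ((\<Sum>f\<in>F. p f * E f i) - 1) / 2))"
    using log_ratio_le Mv.mnl_prob_nonneg unfolding c_def E_def by (intro sum_mono mult_left_mono) auto
  also have "\<dots> = c + ((\<Sum>f\<in>F. p f * (\<Sum>i\<in>insert 0 S. mnl_prob S v i * E f i)) - 1) / 2"
  proof -
    have "(\<Sum>i\<in>insert 0 S. mnl_prob S v i * (((\<Sum>f\<in>F. p f * E f i) - 1) / 2))
        = ((\<Sum>i\<in>insert 0 S. mnl_prob S v i * (\<Sum>f\<in>F. p f * E f i)) - 1) / 2"
      using Mv.sum_mnl_prob
      by (simp add: right_diff_distrib sum_subtractf sum_divide_distrib[symmetric])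
    also have "(\<Sum>i\<in>insert 0 S. mnl_prob S v i * (\<Sum>f\<in>F. p f * E f i))
        = (\<Sum>f\<in>F. p f * (\<Sum>i\<in>insert 0 S. mnl_prob S v i * E f i))"
      by (simp add: sum_distrib_left sum.swap[of _ F] mult.left_commute)
    finally show ?thesis unfolding sum_weighted_add_const[OF Mv.sum_mnl_prob] by simp
  qed
  also have "(\<Sum>f\<in>F. p f * (\<Sum>i\<in>insert 0 S. mnl_prob S v i * E f i))
      \<le> (\<Sum>f\<in>F. p f * (1 - mnl_sqdist f S / (16 * real K)))"
    using expected_exp_sq_loss_gap_le[OF assms] p_nonneg unfolding E_def
    by (intro sum_mono mult_left_mono) auto
  also have "\<dots> = 1 - (\<Sum>f\<in>F. p f * mnl_sqdist f S) / (16 * real K)"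
    using sum_p by (simp add: right_diff_distrib sum_subtractf sum_divide_distrib[symmetric])
  finally show ?thesis unfolding c_def by (simp add: divide_right_mono)
qed


lemma sum_sq_pref_diff_le_sqdist:
  assumes "S \<in> assortments N K" "f \<in> F"
  shows "(\<Sum>i\<in>S. (V f i - v i)\<^sup>2) \<le> (real K + 1) ^ 4 * mnl_sqdist f S"
proof -
  note S = assortments_memD[OF assms(1)]
  have "mnl_choice S (V f)" "mnl_choice S v"
    using assms V_bounds v_bounds by (auto intro: mnl_choice_assortment)
  then have "(\<Sum>i\<in>S. (V f i - v i)\<^sup>2) \<le> (real (card S) + 1) ^ 4 * mnl_sqdist f S"
    unfolding mnl_sqdist_def using S(2) V_bounds[OF assms(2)] v_bounds
    by (intro sum_sq_pref_diff_le) auto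
  also have "\<dots> \<le> (real K + 1) ^ 4 * mnl_sqdist f S"
    using S(4) by (intro mult_right_mono power_mono) (auto simp: mnl_sqdist_def sum_nonneg)
  finally show ?thesis .
qed

lemma regret_gap_le:
  "(\<Sum>g\<in>F. p g * (max_rev N K (V g) r - mnl_rev (Sel g) v r))
     \<le> 8 * real N * real K * (real K + 1) ^ 4 * \<eta>
       + (\<Sum>g\<in>F. p g * (\<Sum>f\<in>F. p f * mnl_sqdist f (Sel g))) / (32 * \<eta> * real K)"
proof -
  define \<gamma> where "\<gamma> = 16 * real K * (real K + 1) ^ 4 * \<eta>"
  have \<gamma>: "0 < \<gamma>" unfolding \<gamma>_def using K \<eta> by simp
  note S = assortments_memD[OF conjunct1[OF Sel]]
  have "(\<Sum>g\<in>F. p g * (max_rev N K (V g) r - mnl_rev (Sel g) v r))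
      \<le> (\<Sum>g\<in>F. p g * (\<Sum>i\<in>Sel g. \<bar>V g i - v i\<bar>))"
  proof (intro sum_mono mult_left_mono p_nonneg)
    fix g assume g: "g \<in> F"
    have "mnl_rev (Sel g) (V g) r - mnl_rev (Sel g) v r \<le> (\<Sum>i\<in>Sel g. \<bar>V g i - v i\<bar>)"
      using S[OF g] V_bounds[OF g] v_bounds r_bounds by (intro mnl_rev_diff_le) auto
    then show "max_rev N K (V g) r - mnl_rev (Sel g) v r \<le> (\<Sum>i\<in>Sel g. \<bar>V g i - v i\<bar>)"
      using Sel[OF g] by simp
  qed
  also have "\<dots> \<le> real N * \<gamma> / 2
      + (\<Sum>g\<in>F. p g * (\<Sum>f\<in>F. p f * (\<Sum>i\<in>Sel g. (V f i - v i)\<^sup>2))) / (2 * \<gamma>)"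
    using S(2) by (intro decoupling_bound[OF finite_F p_nonneg \<gamma>])
  also have "(\<Sum>g\<in>F. p g * (\<Sum>f\<in>F. p f * (\<Sum>i\<in>Sel g. (V f i - v i)\<^sup>2)))
      \<le> (\<Sum>g\<in>F. p g * (\<Sum>f\<in>F. p f * ((real K + 1) ^ 4 * mnl_sqdist f (Sel g))))"
    using sum_sq_pref_diff_le_sqdist[OF conjunct1[OF Sel]] p_nonneg
    by (intro sum_mono mult_left_mono) (auto intro: sum_nonneg)
  also have "\<dots> = (real K + 1) ^ 4 * (\<Sum>g\<in>F. p g * (\<Sum>f\<in>F. p f * mnl_sqdist f (Sel g)))"
    by (simp add: sum_distrib_left algebra_simps)
  finally show ?thesis
    using \<gamma> K \<eta> unfolding \<gamma>_def by (simp add: divide_right_mono field_simps)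
qed

lemma expected_increment_le:
  assumes "g \<in> F"
  shows "(\<Sum>i\<in>insert 0 (Sel g). mnl_prob (Sel g) v i
            * (max_rev N K v r - mnl_rev (Sel g) v r + log_ratio (Sel g) i / \<eta>))
         \<le> (\<Sum>f\<in>F. p f * max_rev N K (V f) r) - mnl_rev (Sel g) v r + 3 * \<eta>
           - (\<Sum>f\<in>F. p f * mnl_sqdist f (Sel g)) / (32 * \<eta> * real K)"
proof -
  interpret Mv: mnl_choice "Sel g" v
    using Sel[OF assms] v_bounds by (intro mnl_choice_assortment) auto
  have "(\<Sum>i\<in>insert 0 (Sel g). mnl_prob (Sel g) v i
          * (max_rev N K v r - mnl_rev (Sel g) v r + log_ratio (Sel g) i / \<eta>))
      = max_rev N K v r - mnl_rev (Sel g) v r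
        + (\<Sum>i\<in>insert 0 (Sel g). mnl_prob (Sel g) v i * log_ratio (Sel g) i) / \<eta>"
    unfolding sum_weighted_add_const[OF Mv.sum_mnl_prob] by (simp add: sum_divide_distrib)
  also have "\<dots> \<le> (\<Sum>f\<in>F. p f * max_rev N K (V f) r) - mnl_rev (Sel g) v r + 3 * \<eta>
      - (\<Sum>f\<in>F. p f * mnl_sqdist f (Sel g)) / (32 * \<eta> * real K)"
    using divide_right_mono[OF expected_log_ratio_le[OF conjunct1[OF Sel[OF assms]]], of \<eta>] \<eta>
    by (simp add: power2_eq_square field_simps)
  finally show ?thesis .
qed

lemma round_bound:
  "(\<Sum>g\<in>F. p g * (\<Sum>i\<in>insert 0 (Sel g). mnl_prob (Sel g) v i
        * (max_rev N K v r - mnl_rev (Sel g) v r + log_ratio (Sel g) i / \<eta>)))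
     \<le> (12 * real N * real K * (real K + 1) ^ 4 + 4) * \<eta>"
proof -
  define M where "M = (\<Sum>f\<in>F. p f * max_rev N K (V f) r)"
  define D where "D g = (\<Sum>f\<in>F. p f * mnl_sqdist f (Sel g))" for g
  have "(\<Sum>g\<in>F. p g * (\<Sum>i\<in>insert 0 (Sel g). mnl_prob (Sel g) v i
        * (max_rev N K v r - mnl_rev (Sel g) v r + log_ratio (Sel g) i / \<eta>)))
      \<le> (\<Sum>g\<in>F. p g * (M - mnl_rev (Sel g) v r + 3 * \<eta> - D g / (32 * \<eta> * real K)))"
    using expected_increment_le p_nonneg unfolding M_def D_def by (intro sum_mono mult_left_mono) auto
  \<comment> \<open>Averaging over the sampled model turns the optimistic value \<open>M\<close> back into the value
    of the sampled model itself: this is where the feel-good term pays for the regret.\<close>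
  also have "\<dots> = (\<Sum>g\<in>F. p g * (max_rev N K (V g) r - mnl_rev (Sel g) v r)) + 3 * \<eta>
      - (\<Sum>g\<in>F. p g * D g) / (32 * \<eta> * real K)"
    using sum_p unfolding M_def
    by (simp add: algebra_simps sum.distrib sum_subtractf sum_distrib_left[symmetric]
        sum_distrib_right[symmetric] sum_divide_distrib[symmetric])
  also have "\<dots> \<le> 8 * real N * real K * (real K + 1) ^ 4 * \<eta> + 3 * \<eta>"
    using regret_gap_le unfolding D_def by simp
  also have "\<dots> \<le> (12 * real N * real K * (real K + 1) ^ 4 + 4) * \<eta>"
    using \<eta> by (simp add: algebra_simps)
  finally show ?thesis .
qed

end

section \<open>The potential argument\<close>

locale fgts =
  fixes F :: "('x \<Rightarrow> nat \<Rightarrow> real) set" and fstar :: "'x \<Rightarrow> nat \<Rightarrow> real"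
    and N K :: nat and \<eta> :: real
    and adv :: "'x round list \<Rightarrow> 'x \<times> (nat \<Rightarrow> real)"
    and sel :: "(nat \<Rightarrow> real) \<Rightarrow> (nat \<Rightarrow> real) \<Rightarrow> nat set"
  assumes K: "1 \<le> K" "K \<le> N" and finite_F: "finite F" and fstar_in_F: "fstar \<in> F"
    and F_bounds: "\<And>f x i. f \<in> F \<Longrightarrow> i \<in> {1..N} \<Longrightarrow> 0 \<le> f x i \<and> f x i \<le> 1"
    and adv_bounds: "\<And>h i. i \<in> {1..N} \<Longrightarrow> 0 \<le> snd (adv h) i \<and> snd (adv h) i \<le> 1"
    and sel: "\<And>v r. sel v r \<in> assortments N K \<and> mnl_rev (sel v r) v r = max_rev N K v r"
    and \<eta>: "0 < \<eta>" "\<eta> \<le> 1"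
begin

definition weight :: "'x round list \<Rightarrow> ('x \<Rightarrow> nat \<Rightarrow> real) \<Rightarrow> real" where
  "weight h f = exp (- \<eta> * cum_loss N K \<eta> f h)"

definition post :: "'x round list \<Rightarrow> ('x \<Rightarrow> nat \<Rightarrow> real) \<Rightarrow> real" where
  "post h f = weight h f / (\<Sum>g\<in>F. weight h g)"

lemma F_nonempty: "F \<noteq> {}"
  using fstar_in_F by auto

lemma sum_weight_pos: "0 < (\<Sum>g\<in>F. weight h g)"
  unfolding weight_def using finite_F F_nonempty by (intro sum_pos) auto

lemma post_nonneg: "0 \<le> post h f"
  using sum_weight_pos[of h] by (simp add: post_def weight_def[of h f])

lemma sum_post: "(\<Sum>f\<in>F. post h f) = 1"
  unfolding post_def using sum_weight_pos[of h] by (simp add: sum_divide_distrib[symmetric])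

lemma
  shows pmf_posterior: "pmf (posterior F N K \<eta> h) f = (if f \<in> F then post h f else 0)"
    and set_posterior: "set_pmf (posterior F N K \<eta> h) \<subseteq> F"
proof -
  define q where "q f = (if f \<in> F then post h f else 0)" for f
  have eq: "posterior F N K \<eta> h = embed_pmf q"
    unfolding posterior_def post_def weight_def q_def ..
  have q: "\<And>f. f \<notin> F \<Longrightarrow> q f = 0" "\<And>f. 0 \<le> q f" "(\<Sum>f\<in>F. q f) = 1"
    using sum_post post_nonneg by (simp_all add: q_def)
  show "pmf (posterior F N K \<eta> h) f = (if f \<in> F then post h f else 0)"
    unfolding eq by (simp add: pmf_embed_pmf_finite[OF finite_F q] q_def)
  show "set_pmf (posterior F N K \<eta> h) \<subseteq> F"
    unfolding eq by (rule set_embed_pmf_finite[OF finite_F q])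
qed

definition rel_partition :: "'x round list \<Rightarrow> real" where
  "rel_partition h = measure_pmf.expectation (pmf_of_set F)
     (\<lambda>f. exp (- \<eta> * (\<Sum>rd\<leftarrow>h. loss_est N K \<eta> f rd - loss_est N K \<eta> fstar rd)))"

definition partition_ratio :: "'x round list \<Rightarrow> 'x round \<Rightarrow> real" where
  "partition_ratio h rd = (\<Sum>f\<in>F. post h f * exp (- \<eta> * (loss_est N K \<eta> f rd - loss_est N K \<eta> fstar rd)))"

definition potential :: "'x round list \<Rightarrow> real" where
  "potential h = (\<Sum>rd\<leftarrow>h. round_regret N K fstar rd) + ln (rel_partition h) / \<eta>"

lemma rel_partition_eq:
  "rel_partition h = (\<Sum>f\<in>F. weight h f) * exp (\<eta> * cum_loss N K \<eta> fstar h) / card F"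
proof -
  have "exp (- \<eta> * (\<Sum>rd\<leftarrow>h. loss_est N K \<eta> f rd - loss_est N K \<eta> fstar rd))
      = weight h f * exp (\<eta> * cum_loss N K \<eta> fstar h)" for f
    unfolding weight_def cum_loss_def sum_list_subtractf by (simp add: exp_add[symmetric] algebra_simps)
  then show ?thesis
    unfolding rel_partition_def integral_pmf_of_set[OF F_nonempty finite_F]
    by (simp add: sum_distrib_right)
qed

lemma rel_partition_pos: "0 < rel_partition h"
  unfolding rel_partition_eq using sum_weight_pos finite_F F_nonempty by (simp add: card_gt_0_iff)

lemma rel_partition_Nil: "rel_partition [] = 1"
  unfolding rel_partition_def integral_pmf_of_set[OF F_nonempty finite_F]
  using finite_F F_nonempty by simp

lemma rel_partition_snoc: "rel_partition (h @ [rd]) = rel_partition h * partition_ratio h rd"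
proof -
  have "weight (h @ [rd]) f * exp (\<eta> * loss_est N K \<eta> fstar rd)
      = weight h f * exp (- \<eta> * (loss_est N K \<eta> f rd - loss_est N K \<eta> fstar rd))" for f
    unfolding weight_def cum_loss_def by (simp add: exp_add[symmetric] algebra_simps)
  then have "(\<Sum>f\<in>F. weight (h @ [rd]) f) * exp (\<eta> * loss_est N K \<eta> fstar rd)
      = (\<Sum>f\<in>F. weight h f * exp (- \<eta> * (loss_est N K \<eta> f rd - loss_est N K \<eta> fstar rd)))"
    by (simp add: sum_distrib_right)
  also have "\<dots> = (\<Sum>f\<in>F. weight h f) * partition_ratio h rd"
    unfolding partition_ratio_def post_def using sum_weight_pos[of h]
    by (simp add: sum_divide_distrib[symmetric])
  finally show ?thesis
    unfolding rel_partition_eq by (simp add: cum_loss_def exp_add algebra_simps)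
qed

lemma partition_ratio_pos: "0 < partition_ratio h rd"
  unfolding partition_ratio_def using finite_F post_nonneg sum_post by (intro sum_weighted_pos) auto

lemma potential_snoc:
  "potential (h @ [rd]) = potential h + (round_regret N K fstar rd + ln (partition_ratio h rd) / \<eta>)"
  unfolding potential_def rel_partition_snoc
  using rel_partition_pos[of h] partition_ratio_pos[of h rd] by (simp add: ln_mult add_divide_distrib)


abbreviation ctx :: "'x round list \<Rightarrow> 'x" where "ctx h \<equiv> fst (adv h)"
abbreviation rew :: "'x round list \<Rightarrow> nat \<Rightarrow> real" where "rew h \<equiv> snd (adv h)"
abbreviation chosen :: "'x round list \<Rightarrow> ('x \<Rightarrow> nat \<Rightarrow> real) \<Rightarrow> nat set" where
  "chosen h g \<equiv> sel (g (ctx h)) (rew h)"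

lemma mnl_choice_chosen: "mnl_choice (chosen h g) (fstar (ctx h))"
  using F_bounds[OF fstar_in_F] by (intro mnl_choice_assortment[OF conjunct1[OF sel]]) auto

lemma finite_set_fgts_step: "finite (set_pmf (fgts_step F N K \<eta> fstar adv sel h))"
proof -
  show ?thesis
    unfolding fgts_step_def Let_def
    using finite_subset[OF set_posterior finite_F] mnl_choice.finite_set_mnl_pmf[OF mnl_choice_chosen]
    by auto
qed

lemma expectation_fgts_step:
  "measure_pmf.expectation (fgts_step F N K \<eta> fstar adv sel h) \<Phi>
     = (\<Sum>g\<in>F. post h g * (\<Sum>i\<in>insert 0 (chosen h g).
          mnl_prob (chosen h g) (fstar (ctx h)) i * \<Phi> (h @ [(g, ctx h, rew h, chosen h g, i)])))"
proof -
  show ?thesis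
    unfolding fgts_step_def Let_def
    using mnl_choice.finite_set_mnl_pmf[OF mnl_choice_chosen] set_posterior
    by (subst pmf_expectation_bind[OF finite_F])
      (auto simp: pmf_posterior mnl_choice.expectation_mnl_pmf[OF mnl_choice_chosen] intro!: sum.cong)
qed

lemma expectation_potential_step:
  "measure_pmf.expectation (fgts_step F N K \<eta> fstar adv sel h) potential
     \<le> potential h + (12 * real N * real K * (real K + 1) ^ 4 + 4) * \<eta>"
proof -
  interpret R: fgts_round N K \<eta> F "post h" "\<lambda>f. f (ctx h)" "fstar (ctx h)" "rew h" "chosen h"
    using K finite_F post_nonneg sum_post F_bounds F_bounds[OF fstar_in_F] adv_bounds sel \<eta>
    by unfold_locales auto
  have increment: "round_regret N K fstar (g, ctx h, rew h, chosen h g, i)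
        + ln (partition_ratio h (g, ctx h, rew h, chosen h g, i)) / \<eta>
      = max_rev N K (fstar (ctx h)) (rew h) - mnl_rev (chosen h g) (fstar (ctx h)) (rew h)
        + R.log_ratio (chosen h g) i / \<eta>" for g i
    unfolding round_regret_def partition_ratio_def R.log_ratio_def R.loss_def loss_est_eq by simp
  define q where "q g i = mnl_prob (chosen h g) (fstar (ctx h)) i" for g i
  define B where "B g i = max_rev N K (fstar (ctx h)) (rew h) - mnl_rev (chosen h g) (fstar (ctx h)) (rew h)
    + R.log_ratio (chosen h g) i / \<eta>" for g i
  have inner: "(\<Sum>i\<in>insert 0 (chosen h g). q g i * (potential h + B g i))
      = potential h + (\<Sum>i\<in>insert 0 (chosen h g). q g i * B g i)" for g
    unfolding q_def by (rule sum_weighted_add_const[OF mnl_choice.sum_mnl_prob[OF mnl_choice_chosen]])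
  have "measure_pmf.expectation (fgts_step F N K \<eta> fstar adv sel h) potential
      = (\<Sum>g\<in>F. post h g * (\<Sum>i\<in>insert 0 (chosen h g). q g i * (potential h + B g i)))"
    unfolding expectation_fgts_step potential_snoc increment q_def B_def ..
  also have "\<dots> = potential h + (\<Sum>g\<in>F. post h g * (\<Sum>i\<in>insert 0 (chosen h g). q g i * B g i))"
    unfolding inner by (rule sum_weighted_add_const[OF sum_post])
  also have "\<dots> \<le> potential h + (12 * real N * real K * (real K + 1) ^ 4 + 4) * \<eta>"
    using R.round_bound unfolding q_def B_def by simp
  finally show ?thesis .
qed

abbreviation traj :: "nat \<Rightarrow> 'x round list pmf" where
  "traj T \<equiv> fgts_traj F N K \<eta> fstar adv sel T"

lemma finite_set_traj: "finite (set_pmf (traj T))"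
  by (induction T) (auto simp: finite_set_fgts_step)

lemma expectation_potential_traj:
  "measure_pmf.expectation (traj T) potential \<le> (12 * real N * real K * (real K + 1) ^ 4 + 4) * \<eta> * real T"
proof (induction T)
  case 0
  then show ?case by (simp add: potential_def rel_partition_Nil)
next
  case (Suc T)
  define c where "c = (12 * real N * real K * (real K + 1) ^ 4 + 4) * \<eta>"
  have int: "integrable (measure_pmf (traj T)) f" for f :: "_ \<Rightarrow> real"
    by (rule integrable_measure_pmf_finite[OF finite_set_traj])
  have "measure_pmf.expectation (traj (Suc T)) potential
      = measure_pmf.expectation (traj T)
          (\<lambda>h. measure_pmf.expectation (fgts_step F N K \<eta> fstar adv sel h) potential)"
    using finite_set_traj[of T] finite_set_fgts_step
    by (simp add: pmf_expectation_bind[of "set_pmf (traj T)"] expectation_pmf_finite)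
  also have "\<dots> \<le> measure_pmf.expectation (traj T) (\<lambda>h. potential h + c)"
    using expectation_potential_step unfolding c_def by (intro integral_mono int) auto
  also have "\<dots> = measure_pmf.expectation (traj T) potential + c"
    using int by simp
  finally show ?case using Suc.IH unfolding c_def by (simp add: algebra_simps)
qed

lemma regret_eq:
  "regret_MNL F N K \<eta> fstar adv sel T
     = measure_pmf.expectation (traj T) potential + Z_term F N K \<eta> fstar adv sel T / \<eta>"
proof -
  have int: "integrable (measure_pmf (traj T)) f" for f :: "_ \<Rightarrow> real"
    by (rule integrable_measure_pmf_finite[OF finite_set_traj])
  show ?thesis
    unfolding regret_MNL_def Z_term_def potential_def rel_partition_def[symmetric]
    using int by simp
qed

end

theorem theorem6:
  fixes F :: "('x \<Rightarrow> nat \<Rightarrow> real) set"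
    and fstar :: "'x \<Rightarrow> nat \<Rightarrow> real"
    and N K T :: nat and \<eta> :: real
    and adv :: "'x round list \<Rightarrow> 'x \<times> (nat \<Rightarrow> real)"
    and sel :: "(nat \<Rightarrow> real) \<Rightarrow> (nat \<Rightarrow> real) \<Rightarrow> nat set"
  assumes "1 \<le> K" and "K \<le> N"
    and "finite F" and "fstar \<in> F"
    and "\<And>f x i. f \<in> F \<Longrightarrow> i \<in> {1..N} \<Longrightarrow> 0 \<le> f x i \<and> f x i \<le> 1"
    and "\<And>h i. i \<in> {1..N} \<Longrightarrow> 0 \<le> snd (adv h) i \<and> snd (adv h) i \<le> 1"
    and "\<And>v r. sel v r \<in> assortments N K \<and> mnl_rev (sel v r) v r = max_rev N K v r"
    and "0 < \<eta>" and "\<eta> \<le> 1"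
  shows "regret_MNL F N K \<eta> fstar adv sel T
           \<le> 12 * \<eta> * real N * real K * (real K + 1) ^ 4 * real T + 4 * \<eta> * real T
             + Z_term F N K \<eta> fstar adv sel T / \<eta>"
proof -
  interpret fgts F fstar N K \<eta> adv sel
    using assms by unfold_locales auto
  have "regret_MNL F N K \<eta> fstar adv sel T
      = measure_pmf.expectation (traj T) potential + Z_term F N K \<eta> fstar adv sel T / \<eta>"
    by (rule regret_eq)
  also have "\<dots> \<le> (12 * real N * real K * (real K + 1) ^ 4 + 4) * \<eta> * real T
      + Z_term F N K \<eta> fstar adv sel T / \<eta>"
    using expectation_potential_traj by simp
  finally show ?thesis by (simp add: algebra_simps)
qed

end
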